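(* Let $\nu\ge3$ be a square-free integer with $\nu\equiv2$ or $3\pmod 4$, and for $n\ge0$ let $P_n(t)=(t^2-\nu)^{\circ n}\in\mathbb{Z}[t]$ (so $P_0(t)=t$), with constant term $C_n$. Let $p$ be an odd prime not dividing $\nu$ such that $p$ divides $C_n$ for some $n\ge1$, and let $n(p)$ be the least positive integer $n$ with $p\mid C_n$. Then for any non-negative integers $k,\ell$ which are distinct modulo $n(p)$, the reductions $\bar P_k$ and $\bar P_\ell$ modulo $p$ are coprime in $\mathbb{F}_p[t]$. *)

theory Defs
  imports "HOL-Computational_Algebra.Computational_Algebra" "Berlekamp_Zassenhaus.Finite_Field"
begin

fun iterP :: "int \<Rightarrow> nat \<Rightarrow> int poly" where
  "iterP nu 0 = [:0, 1:]"
| "iterP nu (Suc n) = pcompose [:-nu, 0, 1:] (iterP nu n)"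

definition constC :: "int \<Rightarrow> nat \<Rightarrow> int" where
  "constC nu n = Polynomial.coeff (iterP nu n) 0"

end

theory Submission
  imports Defs
begin

text \<open>
  Write P_d = C_d + t R(t). Then P_(d+k) = P_d \<circ> P_k = C_d + P_k R(P_k), so every common
  divisor of P_k and P_(d+k) divides the constant C_d, a unit modulo p unless p divides C_d.
  If p divides C_N then C_(m+N) = P_m(C_N) \<equiv> P_m(0) = C_m (mod p), so the constant terms are
  periodic modulo p with period n(p), and p divides C_d only if n(p) divides d.
\<close>

lemma iterP_add: "iterP nu (m + n) = iterP nu m \<circ>\<^sub>p iterP nu n"
  by (induction m) (simp_all add: pcompose_assoc)

lemma constC_0 [simp]: "constC nu 0 = 0"
  by (simp add: constC_def)

lemma constC_add: "constC nu (m + n) = poly (iterP nu m) (constC nu n)"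
  unfolding constC_def by (simp add: iterP_add poly_0_coeff_0[symmetric] poly_pcompose)

lemma cong_poly:
  fixes q :: "'a::unique_euclidean_ring poly"
  assumes "[x = y] (mod m)"
  shows "[poly q x = poly q y] (mod m)"
  unfolding poly_altdef by (intro cong_sum cong_mult cong_pow cong_refl assms)

lemma constC_cong_mod_period:
  assumes "p dvd constC nu N"
  shows "[constC nu m = constC nu (m mod N)] (mod p)"
proof -
  have shift: "[constC nu (r + N) = constC nu r] (mod p)" for r
  proof -
    have "[constC nu N = 0] (mod p)" using assms by (simp add: cong_0_iff)
    then have "[poly (iterP nu r) (constC nu N) = poly (iterP nu r) (constC nu 0)] (mod p)"
      by (simp add: cong_poly)
    then show ?thesis using constC_add[of nu r 0] by (simp add: constC_add)
  qed
  have "[constC nu (r + j * N) = constC nu r] (mod p)" for r j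
  proof (induction j)
    case (Suc j)
    have "[constC nu (r + j * N + N) = constC nu r] (mod p)"
      using shift Suc.IH by (rule cong_trans)
    then show ?case by (simp add: ac_simps)
  qed simp
  from this[of "m mod N" "m div N"] show ?thesis by simp
qed

lemma constC_dvd_imp_least_dvd:
  assumes "\<exists>n\<ge>1. p dvd constC nu n" and "p dvd constC nu d"
  shows "(LEAST n. n \<ge> 1 \<and> p dvd constC nu n) dvd d"
proof -
  define N where "N = (LEAST n. n \<ge> 1 \<and> p dvd constC nu n)"
  have N: "N \<ge> 1" "p dvd constC nu N"
    using LeastI_ex[OF assms(1)] by (simp_all add: N_def)
  have "p dvd constC nu (d mod N)"
    using constC_cong_mod_period[OF N(2)] assms(2) cong_dvd_iff by blast
  moreover have "d mod N < N" using N(1) by simp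
  then have "\<not> (d mod N \<ge> 1 \<and> p dvd constC nu (d mod N))"
    unfolding N_def by (rule not_less_Least)
  ultimately have "d mod N = 0" by simp
  then show ?thesis by (simp add: N_def mod_eq_0_iff_dvd)
qed

lemma coprime_pcompose_right:
  fixes f g :: "'a::field poly"
  assumes "poly f 0 \<noteq> 0"
  shows "coprime g (f \<circ>\<^sub>p g)"
proof -
  obtain c r where f: "f = pCons c r" by (rule pCons_cases)
  have unit: "is_unit [:c:]" using assms by (simp add: f is_unit_const_poly_iff)
  show ?thesis
  proof (rule coprimeI)
    fix h assume "h dvd g" "h dvd f \<circ>\<^sub>p g"
    then have "h dvd f \<circ>\<^sub>p g - g * (r \<circ>\<^sub>p g)" by (simp add: dvd_diff)
    then have "h dvd [:c:]" by (simp add: f pcompose_pCons)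
    then show "is_unit h" using unit by (rule dvd_unit_imp_unit)
  qed
qed

lemma coprime_iterP_mod_ring:
  assumes "\<not> int CARD('p) dvd constC nu d"
  shows "coprime (of_int_poly (iterP nu k) :: 'p::prime_card mod_ring poly)
                 (of_int_poly (iterP nu (d + k)))"
proof -
  have "poly (of_int_poly (iterP nu d) :: 'p mod_ring poly) 0 \<noteq> 0"
    using assms by (simp add: poly_0_coeff_0 constC_def of_int_eq_0_iff_char_dvd)
  then show ?thesis
    by (simp add: iterP_add of_int_hom.map_poly_pcompose coprime_pcompose_right)
qed

theorem lemma4p6:
  fixes nu :: int and k l :: nat
  defines "p \<equiv> int CARD('p::prime_card)"
  assumes "nu \<ge> 3" and "squarefree nu" and "nu mod 4 = 2 \<or> nu mod 4 = 3"
    and "odd p" and "\<not> p dvd nu"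
    and "\<exists>n\<ge>1. p dvd constC nu n"
    and "k mod (LEAST n. n \<ge> 1 \<and> p dvd constC nu n) \<noteq> l mod (LEAST n. n \<ge> 1 \<and> p dvd constC nu n)"
  shows "coprime (map_poly (of_int :: int \<Rightarrow> 'p mod_ring) (iterP nu k))
                 (map_poly (of_int :: int \<Rightarrow> 'p mod_ring) (iterP nu l))"
proof -
  define N where "N = (LEAST n. n \<ge> 1 \<and> p dvd constC nu n)"
  have coprime_le: "coprime (of_int_poly (iterP nu a) :: 'p mod_ring poly) (of_int_poly (iterP nu b))"
    if "a \<le> b" and "a mod N \<noteq> b mod N" for a b
  proof -
    have "\<not> N dvd b - a" using that mod_eq_dvd_iff_nat[of a b N] by auto
    then have "\<not> p dvd constC nu (b - a)"
      using constC_dvd_imp_least_dvd[OF assms(7)] by (auto simp: N_def)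
    then show ?thesis
      using coprime_iterP_mod_ring[of nu "b - a" a] that(1) by (simp add: p_def)
  qed
  show ?thesis
    using coprime_le[of k l] coprime_le[of l k] assms(8)
    by (cases "k \<le> l") (auto simp: N_def coprime_commute)
qed

end
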